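(* Let $n \ge 2$, let $\lambda = a_1\omega_1 + a_2\omega_2 + a_3\omega_3$ with $a_1,a_2,a_3 \in \mathbb{Z}_{\ge 0}$, and let $\nu, \eta$ be dominant integral weights of $\mathfrak{sl}(2n,\mathbb{C})$ such that the shapes of $\nu$ and $\eta$ are both contained in the shape of $\lambda$ and the shape of $\eta$ is even. Then $$|\operatorname{LRS}(\lambda/\nu, \eta)| = c^{\lambda}_{\nu,\eta}.$$
   Context: $\omega_1,\dots,\omega_{2n-1}$ are the fundamental weights of $\mathfrak{sl}(2n,\mathbb{C})$. To a dominant weight $\mu = \sum b_i\omega_i$ associate its shape: the Young diagram (left- and top-justified boxes) with $b_i$ columns of length $i$, longer columns to the left. Shape containment means containment of diagrams aligned at their top-left corners. A shape is even if all its columns have even length. $l(\eta)$ denotes the length of the longest column of the shape of $\eta$. For $\nu \subseteq \lambda$, a tableau of skew shape $\lambda/\nu$ is a filling of the boxes of the shape of $\lambda$ not in the shape of $\nu$ with letters from $\{1,\dots,2n\}$; it is semi-standard if rows weakly increase left to right and columns strictly increase downward. Its word is obtained by reading rows from right to left, top row first, ignoring empty boxes. A word $w_1\cdots w_k$ is dominant if for every prefix and every $i$, the number of letters $i$ in the prefix is at least the number of letters $i+1$. $\operatorname{LR}(\lambda/\nu,\eta)$ (Littlewood–Richardson tableaux) is the set of semi-standard tableaux of skew shape $\lambda/\nu$ whose word is dominant and has weight $\eta$ (i.e. for each $i$, the number of entries equal to $i$ is the number of boxes in row $i$ of the shape of $\eta$). $\operatorname{LRS}(\lambda/\nu,\eta)$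 ($n$-symplectic Sundaram tableaux) is the subset of those in which, for each $i \in \{0,1,\dots,\tfrac12 l(\eta)\}$, the letter $2i+1$ does not appear in any row strictly below row $n+i$. The Littlewood–Richardson coefficient $c^\lambda_{\nu,\eta}$ is the multiplicity of the simple module ${\rm L}(\lambda)$ in ${\rm L}(\nu)\otimes{\rm L}(\eta)$ for $\mathfrak{sl}(2n,\mathbb{C})$ (equivalently $|\operatorname{LR}(\lambda/\nu,\eta)|$). *)

theory Defs
  imports Main
begin

text \<open>A dominant integral weight of sl(2n) is encoded by its coefficient function
  b, where mu = sum of b i * omega_i for i in {1..2n-1}; b vanishes elsewhere.\<close>

definition dom_weight :: "nat \<Rightarrow> (nat \<Rightarrow> nat) \<Rightarrow> bool" where
  "dom_weight n b \<longleftrightarrow> (\<forall>i. b i \<noteq> 0 \<longrightarrow> 1 \<le> i \<and> i \<le> 2*n - 1)"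

text \<open>Length of row j (j >= 1) of the shape: number of columns of length >= j.\<close>
definition shape_row :: "nat \<Rightarrow> (nat \<Rightarrow> nat) \<Rightarrow> nat \<Rightarrow> nat" where
  "shape_row n b j = (\<Sum>i\<in>{j..2*n-1}. b i)"

definition boxes :: "nat \<Rightarrow> (nat \<Rightarrow> nat) \<Rightarrow> (nat \<times> nat) set" where
  "boxes n b = {(r, c). 1 \<le> r \<and> 1 \<le> c \<and> c \<le> shape_row n b r}"

definition shape_contained :: "nat \<Rightarrow> (nat \<Rightarrow> nat) \<Rightarrow> (nat \<Rightarrow> nat) \<Rightarrow> bool" where
  "shape_contained n \<nu> lam \<longleftrightarrow> boxes n \<nu> \<subseteq> boxes n lam"

definition even_shape :: "(nat \<Rightarrow> nat) \<Rightarrow> bool" where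
  "even_shape b \<longleftrightarrow> (\<forall>i. odd i \<longrightarrow> b i = 0)"

definition longest_col :: "nat \<Rightarrow> (nat \<Rightarrow> nat) \<Rightarrow> nat" where
  "longest_col n b = Max (insert 0 {i \<in> {1..2*n-1}. b i \<noteq> 0})"

definition skew :: "nat \<Rightarrow> (nat \<Rightarrow> nat) \<Rightarrow> (nat \<Rightarrow> nat) \<Rightarrow> (nat \<times> nat) set" where
  "skew n lam \<nu> = boxes n lam - boxes n \<nu>"

text \<open>A tableau is a function T r c giving the letter in box (r,c); it is 0 outside the
  skew shape so that each tableau has a unique representation.\<close>
definition semistandard ::
  "nat \<Rightarrow> (nat \<Rightarrow> nat) \<Rightarrow> (nat \<Rightarrow> nat) \<Rightarrow> (nat \<Rightarrow> nat \<Rightarrow> nat) \<Rightarrow> bool" where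
  "semistandard n lam \<nu> T \<longleftrightarrow>
     (\<forall>r c. (r, c) \<in> skew n lam \<nu> \<longrightarrow> 1 \<le> T r c \<and> T r c \<le> 2*n) \<and>
     (\<forall>r c. (r, c) \<notin> skew n lam \<nu> \<longrightarrow> T r c = 0) \<and>
     (\<forall>r c c'. (r, c) \<in> skew n lam \<nu> \<and> (r, c') \<in> skew n lam \<nu> \<and> c < c' \<longrightarrow> T r c \<le> T r c') \<and>
     (\<forall>r r' c. (r, c) \<in> skew n lam \<nu> \<and> (r', c) \<in> skew n lam \<nu> \<and> r < r' \<longrightarrow> T r c < T r' c)"

definition tab_word ::
  "nat \<Rightarrow> (nat \<Rightarrow> nat) \<Rightarrow> (nat \<Rightarrow> nat) \<Rightarrow> (nat \<Rightarrow> nat \<Rightarrow> nat) \<Rightarrow> nat list" where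
  "tab_word n lam \<nu> T =
     concat (map (\<lambda>r. map (\<lambda>c. T r c)
                   (rev (filter (\<lambda>c. (r, c) \<in> skew n lam \<nu>) [1..<shape_row n lam r + 1])))
             [1..<2*n])"

definition dominant_word :: "nat list \<Rightarrow> bool" where
  "dominant_word w \<longleftrightarrow>
     (\<forall>k i. 1 \<le> i \<longrightarrow> count_list (take k w) (i + 1) \<le> count_list (take k w) i)"

definition has_weight :: "nat \<Rightarrow> nat list \<Rightarrow> (nat \<Rightarrow> nat) \<Rightarrow> bool" where
  "has_weight n w \<eta> \<longleftrightarrow> (\<forall>i. 1 \<le> i \<longrightarrow> count_list w i = shape_row n \<eta> i)"

definition LR :: "nat \<Rightarrow> (nat \<Rightarrow> nat) \<Rightarrow> (nat \<Rightarrow> nat) \<Rightarrow> (nat \<Rightarrow> nat) \<Rightarrow> (nat \<Rightarrow> nat \<Rightarrow> nat) set" where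
  "LR n lam \<nu> \<eta> = {T. semistandard n lam \<nu> T \<and> dominant_word (tab_word n lam \<nu> T)
                      \<and> has_weight n (tab_word n lam \<nu> T) \<eta>}"

definition LRS :: "nat \<Rightarrow> (nat \<Rightarrow> nat) \<Rightarrow> (nat \<Rightarrow> nat) \<Rightarrow> (nat \<Rightarrow> nat) \<Rightarrow> (nat \<Rightarrow> nat \<Rightarrow> nat) set" where
  "LRS n lam \<nu> \<eta> = {T \<in> LR n lam \<nu> \<eta>.
      \<forall>i \<le> longest_col n \<eta> div 2. \<forall>r c. (r, c) \<in> skew n lam \<nu> \<and> T r c = 2*i + 1 \<longrightarrow> r \<le> n + i}"

definition lr_coeff :: "nat \<Rightarrow> (nat \<Rightarrow> nat) \<Rightarrow> (nat \<Rightarrow> nat) \<Rightarrow> (nat \<Rightarrow> nat) \<Rightarrow> nat" where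
  "lr_coeff n lam \<nu> \<eta> = card (LR n lam \<nu> \<eta>)"

end

theory Submission
  imports Defs
begin

text \<open>Since the shape of \<open>\<lambda>\<close> has at most three rows, the only Sundaram condition that is
  not automatic is that the letter 1 does not occur in row 3 (relevant when \<open>n = 2\<close>).
  As the shape of \<open>\<eta>\<close> is even, \<open>\<eta>\<close> has as many 1s as 2s. Rows are read right to left and
  increase weakly, so a 1 in the last nonempty row is followed only by letters \<open>\<le> 1\<close>;
  dominance of the prefix before it then forces strictly more 1s than 2s in the word.\<close>

definition row_word :: "nat \<Rightarrow> (nat \<Rightarrow> nat) \<Rightarrow> (nat \<Rightarrow> nat) \<Rightarrow> (nat \<Rightarrow> nat \<Rightarrow> nat) \<Rightarrow> nat \<Rightarrow> nat list"
  where "row_word n lam \<nu> T r =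
    map (T r) (rev (filter (\<lambda>c. (r, c) \<in> skew n lam \<nu>) [1..<shape_row n lam r + 1]))"

lemma tab_word_eq_concat_row_word:
  "tab_word n lam \<nu> T = concat (map (row_word n lam \<nu> T) [1..<2*n])"
  unfolding tab_word_def row_word_def by (rule refl)

lemma shape_row_eq_0:
  assumes "\<forall>i>m. lam i = 0" "m < r"
  shows "shape_row n lam r = 0"
  unfolding shape_row_def using assms by (intro sum.neutral) auto

lemma row_word_eq_Nil:
  assumes "\<forall>i>m. lam i = 0" "m < r"
  shows "row_word n lam \<nu> T r = []"
  using shape_row_eq_0[OF assms] by (simp add: row_word_def)

lemma skew_row_le:
  assumes "\<forall>i>m. lam i = 0" "(r, c) \<in> skew n lam \<nu>"
  shows "r \<le> m"
  using assms shape_row_eq_0[of m lam r n] by (force simp: skew_def boxes_def)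

lemma tab_word_eq_last_row:
  assumes "\<forall>i>m. lam i = 0" "1 \<le> m" "m < 2*n"
  shows "tab_word n lam \<nu> T =
    concat (map (row_word n lam \<nu> T) [1..<m]) @ row_word n lam \<nu> T m"
proof -
  have "[1..<2*n] = [1..<m] @ [m..<2*n]"
    using assms(2,3) upt_add_eq_append[of 1 m "2*n - m"] by simp
  also have "[m..<2*n] = m # [Suc m..<2*n]"
    using assms(3) by (rule upt_conv_Cons)
  finally have "[1..<2*n] = [1..<m] @ m # [Suc m..<2*n]" .
  moreover have "concat (map (row_word n lam \<nu> T) [Suc m..<2*n]) = []"
    using row_word_eq_Nil[OF assms(1)] by (simp add: concat_eq_Nil_conv)
  ultimately show ?thesis by (simp add: tab_word_eq_concat_row_word)
qed

lemma mem_row_word: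
  assumes "(r, c) \<in> skew n lam \<nu>"
  shows "T r c \<in> set (row_word n lam \<nu> T r)"
proof -
  have "c \<in> set (filter (\<lambda>c. (r, c) \<in> skew n lam \<nu>) [1..<shape_row n lam r + 1])"
    using assms by (auto simp: skew_def boxes_def)
  then show ?thesis unfolding row_word_def set_map set_rev by (rule imageI)
qed

lemma row_word_sorted:
  assumes "semistandard n lam \<nu> T"
  shows "sorted_wrt (\<ge>) (row_word n lam \<nu> T r)"
proof -
  let ?cols = "filter (\<lambda>c. (r, c) \<in> skew n lam \<nu>) [1..<shape_row n lam r + 1]"
  have "sorted_wrt (<) ?cols" by (rule sorted_wrt_filter) (rule sorted_wrt_upt)
  then have "sorted_wrt (\<lambda>c c'. T r c \<le> T r c') ?cols"
    by (rule sorted_wrt_mono_rel[rotated]) (use assms in \<open>auto simp: semistandard_def simp del: upt_Suc\<close>)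
  then show ?thesis by (simp add: row_word_def sorted_wrt_map sorted_wrt_rev)
qed

lemma dominant_word_balanced_suffix:
  assumes "dominant_word (u @ v)" "1 \<le> i"
    and "count_list (u @ v) (Suc i) = count_list (u @ v) i"
    and "Suc i \<notin> set v"
  shows "i \<notin> set v"
proof -
  have "count_list (take (length u) (u @ v)) (i + 1) \<le> count_list (take (length u) (u @ v)) i"
    using assms(1,2) unfolding dominant_word_def by blast
  then have "count_list u (Suc i) \<le> count_list u i" by simp
  moreover have "count_list v (Suc i) = 0" using assms(4) by (simp add: count_list_0_iff)
  ultimately have "count_list v i = 0" using assms(3) by simp
  then show ?thesis by (simp add: count_list_0_iff)
qed

lemma shape_row_1_eq_shape_row_2:
  assumes "even_shape \<eta>"
  shows "shape_row n \<eta> 1 = shape_row n \<eta> 2"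
proof (cases "2*n - 1 = 0")
  case True
  then show ?thesis by (simp add: shape_row_def)
next
  case False
  then have "shape_row n \<eta> 1 = \<eta> 1 + shape_row n \<eta> 2"
    unfolding shape_row_def by (subst sum.atLeast_Suc_atMost) (simp_all add: numeral_2_eq_2)
  with assms show ?thesis by (simp add: even_shape_def)
qed

lemma LR_no_one_in_last_row:
  assumes "\<forall>i>m. lam i = 0" "1 \<le> m" "m < 2*n"
    and "even_shape \<eta>" "T \<in> LR n lam \<nu> \<eta>" "(m, c) \<in> skew n lam \<nu>"
  shows "T m c \<noteq> 1"
proof
  assume one: "T m c = 1"
  define w where "w = tab_word n lam \<nu> T"
  have ss: "semistandard n lam \<nu> T" and dom: "dominant_word w" and wt: "has_weight n w \<eta>"
    using assms(5) by (simp_all add: LR_def w_def)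
  obtain v1 v2 where row: "row_word n lam \<nu> T m = v1 @ 1 # v2"
    using mem_row_word[OF assms(6), of T] one by (metis split_list)
  have "\<forall>x\<in>set v2. x \<le> 1"
    using row_word_sorted[OF ss, of m] by (simp add: row sorted_wrt_append)
  then have no_two: "Suc 1 \<notin> set (1 # v2)" by auto
  define u where "u = concat (map (row_word n lam \<nu> T) [1..<m]) @ v1"
  have w: "w = u @ 1 # v2"
    using tab_word_eq_last_row[OF assms(1-3)] by (simp add: w_def u_def row)
  have balanced: "count_list w (Suc 1) = count_list w 1"
    using wt shape_row_1_eq_shape_row_2[OF assms(4), of n] by (simp add: has_weight_def numeral_2_eq_2)
  then have "1 \<notin> set (1 # v2)"
    using dominant_word_balanced_suffix[OF dom[unfolded w] _ balanced[unfolded w] no_two] by simp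
  then show False by simp
qed

theorem lemma6p4:
  fixes n a1 a2 a3 :: nat and \<nu> \<eta> :: "nat \<Rightarrow> nat"
  defines "lam \<equiv> (\<lambda>i::nat. if i = 1 then a1 else if i = 2 then a2 else if i = 3 then a3 else 0)"
  assumes "2 \<le> n"
    and "dom_weight n \<nu>" and "dom_weight n \<eta>"
    and "shape_contained n \<nu> lam" and "shape_contained n \<eta> lam"
    and "even_shape \<eta>"
  shows "card (LRS n lam \<nu> \<eta>) = lr_coeff n lam \<nu> \<eta>"
proof -
  have lam3: "\<forall>i>3. lam i = 0" by (simp add: lam_def)
  have "r \<le> n + i" if T: "T \<in> LR n lam \<nu> \<eta>" and rc: "(r, c) \<in> skew n lam \<nu>"
    and letter: "T r c = 2*i + 1" for T i r c
  proof -
    have "r \<le> 3" using skew_row_le[OF lam3 rc] .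
    moreover have "\<not> (r = 3 \<and> i = 0)"
      using LR_no_one_in_last_row[OF lam3 _ _ assms(7) T, of c] rc letter assms(2) by auto
    ultimately show ?thesis using assms(2) by linarith
  qed
  then have "LRS n lam \<nu> \<eta> = LR n lam \<nu> \<eta>" unfolding LRS_def by blast
  then show ?thesis by (simp add: lr_coeff_def)
qed

end
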